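(* Let $\rho:\mathbb{Z}\to[0,\infty)$ be a weight with finite moments, and let $f,g$ be polynomials with $\deg f\le 2$, $\deg g\le 1$, satisfying $f(x+1)\rho(x+1)-f(x)\rho(x)=g(x)\rho(x)$ for all $x\in\mathbb{Z}$, and such that $\rho(x)f(x)$ vanishes at the end points of the support of $\rho$. Let $\{p_n\}_{n\ge0}$ be the monic polynomials ($\deg p_n=n$) orthogonal with respect to $\rho$: $\sum_{x\in\mathbb{Z}}p_m(x)p_n(x)\rho(x)=h_n\delta_{n,m}$ with $h_n>0$. Let $\mathcal{A}_{\rm l}=g(x)T+f(x)(\Delta+\nabla)$ with $T\phi(x)=\phi(x+1)$, $\Delta\phi(x)=\phi(x+1)-\phi(x)$, $\nabla\phi(x)=\phi(x)-\phi(x-1)$. Then there are real constants $c_n$ ($n\ge0$), depending only on $n$, $f$ and $g$, such that for all $n\ge0$ $$\mathcal{A}_{\rm l}p_n(x)=-\frac{c_n}{h_{n+1}}p_{n+1}(x)+\frac{c_{n-1}}{h_{n-1}}p_{n-1}(x)$$ (with the convention $p_{-1}=0$). Equivalently, with $\langle\phi,\psi\rangle=\sum_{x\in\mathbb{Z}}\phi(x)\psi(x)\rho(x)$, one has $\langle p_j,\mathcal{A}_{\rm l}p_k\rangle=c_j\delta_{k,j+1}-c_k\delta_{j,k+1}$ for all $j,k\ge0$.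
   Context: $\rho$ is taken to be zero outside its support; the orthogonal polynomials are assumed to exist for all degrees $n\ge0$. *)

theory Defs
  imports "HOL-Analysis.Analysis" "HOL-Computational_Algebra.Polynomial"
begin

definition shiftT :: "(int \<Rightarrow> real) \<Rightarrow> int \<Rightarrow> real" where
  "shiftT \<phi> x = \<phi> (x + 1)"

definition fdiff :: "(int \<Rightarrow> real) \<Rightarrow> int \<Rightarrow> real" where
  "fdiff \<phi> x = \<phi> (x + 1) - \<phi> x"

definition bdiff :: "(int \<Rightarrow> real) \<Rightarrow> int \<Rightarrow> real" where
  "bdiff \<phi> x = \<phi> x - \<phi> (x - 1)"

definition Al :: "real poly \<Rightarrow> real poly \<Rightarrow> (int \<Rightarrow> real) \<Rightarrow> int \<Rightarrow> real" where
  "Al f g \<phi> x = poly g (real_of_int x) * shiftT \<phi> x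
                + poly f (real_of_int x) * (fdiff \<phi> x + bdiff \<phi> x)"

definition wip :: "(int \<Rightarrow> real) \<Rightarrow> (int \<Rightarrow> real) \<Rightarrow> (int \<Rightarrow> real) \<Rightarrow> real" where
  "wip \<rho> \<phi> \<psi> = (\<Sum>\<^sub>\<infinity>x. \<phi> x * \<psi> x * \<rho> x)"

definition wsupp :: "(int \<Rightarrow> real) \<Rightarrow> int set" where
  "wsupp \<rho> = {x. \<rho> x \<noteq> 0}"

text \<open>rho f vanishes at the end points of the support of rho: at a finite end point
  the value is zero; at an infinite end point the limit is zero.\<close>
definition vanishes_at_endpoints :: "(int \<Rightarrow> real) \<Rightarrow> real poly \<Rightarrow> bool" where
  "vanishes_at_endpoints \<rho> f \<longleftrightarrow>
     (\<forall>a. a \<in> wsupp \<rho> \<and> (\<forall>y\<in>wsupp \<rho>. a \<le> y) \<longrightarrow> \<rho> a * poly f (real_of_int a) = 0) \<and>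
     (\<forall>b. b \<in> wsupp \<rho> \<and> (\<forall>y\<in>wsupp \<rho>. y \<le> b) \<longrightarrow> \<rho> b * poly f (real_of_int b) = 0) \<and>
     (\<not> bdd_below (wsupp \<rho>) \<longrightarrow> ((\<lambda>x. \<rho> x * poly f (real_of_int x)) \<longlongrightarrow> 0) at_bot) \<and>
     (\<not> bdd_above (wsupp \<rho>) \<longrightarrow> ((\<lambda>x. \<rho> x * poly f (real_of_int x)) \<longlongrightarrow> 0) at_top)"

end

theory Submission
  imports Defs
begin

(* Summation by parts against the Pearson equation moves a backward shift under the weight onto
   the factor f + g, and this makes A_l skew-adjoint: <Q, A_l R> = - <R, A_l Q> for all
   polynomials Q, R.  Because Delta + nabla lowers degrees by one, the bounds deg f <= 2 and
   deg g <= 1 make A_l raise degrees by at most one.  Hence <p_j, A_l p_k> = 0 by orthogonality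
   when j > k + 1, by skew-adjointness when k > j + 1, and again by skew-adjointness when j = k.
   Expanding A_l p_n in the orthogonal basis then gives the three-term formula with
   c_n = <p_n, A_l p_(n+1)>. *)

lemma has_sum_sum:
  fixes F :: "'i \<Rightarrow> 'a \<Rightarrow> 'b::topological_comm_monoid_add"
  assumes "finite I" "\<And>i. i \<in> I \<Longrightarrow> (F i has_sum s i) A"
  shows "((\<lambda>x. \<Sum>i\<in>I. F i x) has_sum (\<Sum>i\<in>I. s i)) A"
  using assms by (induction I rule: finite_induct) (auto intro: has_sum_add)

lemma monic_basis_expansion:
  fixes p :: "nat \<Rightarrow> 'a::comm_ring_1 poly"
  assumes deg_p: "\<And>n. degree (p n) = n" and monic: "\<And>n. lead_coeff (p n) = 1"
  shows "degree Q \<le> m \<Longrightarrow> \<exists>a. Q = (\<Sum>k\<le>m. smult (a k) (p k))"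
proof (induction m arbitrary: Q)
  case 0
  have "p 0 = 1"
    using degree_0_id[of "p 0"] deg_p[of 0] monic[of 0] by (simp add: one_pCons)
  moreover have "Q = [:coeff Q 0:]"
    using 0 degree_0_id[of Q] by simp
  ultimately have "Q = smult (coeff Q 0) (p 0)"
    by simp
  then show ?case by auto
next
  case (Suc m)
  define Q' where "Q' = Q - smult (coeff Q (Suc m)) (p (Suc m))"
  have "degree Q' \<le> Suc m"
    unfolding Q'_def using Suc.prems deg_p
    by (intro degree_diff_le) (auto intro: order_trans[OF degree_smult_le])
  moreover have "coeff Q' (Suc m) = 0"
    unfolding Q'_def using deg_p monic by simp
  ultimately have "degree Q' \<le> m"
    by (metis degree_0 le_Suc_eq leading_coeff_0_iff nat.distinct(1))
  then obtain a where a: "Q' = (\<Sum>k\<le>m. smult (a k) (p k))" using Suc.IH by blast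
  have "Q = (\<Sum>k\<le>Suc m. smult ((a(Suc m := coeff Q (Suc m))) k) (p k))"
    using a unfolding Q'_def by (simp add: algebra_simps)
  then show ?case by blast
qed

definition Al_poly :: "real poly \<Rightarrow> real poly \<Rightarrow> real poly \<Rightarrow> real poly" where
  "Al_poly f g Q = g * pcompose Q [:1, 1:] + f * (pcompose Q [:1, 1:] - pcompose Q [:-1, 1:])"

lemma Al_eq_poly_Al_poly:
  "Al f g (\<lambda>y. poly Q (real_of_int y)) = (\<lambda>y. poly (Al_poly f g Q) (real_of_int y))"
  by (rule ext) (simp add: Al_def shiftT_def fdiff_def bdiff_def Al_poly_def poly_pcompose algebra_simps)

lemma degree_pcompose_shift_diff_less:
  fixes Q :: "'a::idom poly"
  assumes "degree Q > 0"
  shows "degree (pcompose Q [:c, 1:] - pcompose Q [:d, 1:]) < degree Q"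
proof -
  have deg: "degree (pcompose Q [:e, 1:]) = degree Q" for e :: 'a
    by (simp add: degree_pcompose)
  have lead: "lead_coeff (pcompose Q [:e, 1:]) = lead_coeff Q" for e :: 'a
    by (simp add: lead_coeff_comp)
  have "degree (pcompose Q [:c, 1:] - pcompose Q [:d, 1:]) \<le> degree Q"
    by (metis deg degree_diff_le order_refl)
  moreover have "coeff (pcompose Q [:c, 1:] - pcompose Q [:d, 1:]) (degree Q) = 0"
    by (metis coeff_diff deg lead diff_self)
  ultimately show ?thesis
    using assms by (metis degree_0 le_neq_implies_less leading_coeff_0_iff)
qed

lemma degree_Al_poly_le:
  assumes "degree f \<le> 2" "degree g \<le> 1"
  shows "degree (Al_poly f g Q) \<le> degree Q + 1"
proof -
  define D where "D = pcompose Q [:1, 1:] - pcompose Q [:-1, 1:]"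
  have "degree (f * D) \<le> degree Q + 1"
  proof (cases "degree Q = 0")
    case True
    then have "D = 0" unfolding D_def by (metis degree_0_id pcompose_const diff_self)
    then show ?thesis by simp
  next
    case False
    then have "degree D < degree Q"
      unfolding D_def by (simp add: degree_pcompose_shift_diff_less)
    then show ?thesis using degree_mult_le[of f D] assms(1) by linarith
  qed
  moreover have "degree (g * pcompose Q [:1, 1:]) \<le> degree Q + 1"
    using degree_mult_le[of g "pcompose Q [:1, 1:]"] assms(2) by (simp add: degree_pcompose)
  ultimately show ?thesis
    unfolding Al_poly_def D_def[symmetric] by (metis degree_add_le)
qed

locale moment_weight =
  fixes \<rho> :: "int \<Rightarrow> real"
  assumes nonneg: "\<And>x. \<rho> x \<ge> 0"
    and moments: "\<And>k::nat. (\<lambda>x. \<bar>real_of_int x\<bar> ^ k * \<rho> x) summable_on UNIV"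
begin

definition wsum :: "real poly \<Rightarrow> real" where
  "wsum P = (\<Sum>\<^sub>\<infinity>x. poly P (real_of_int x) * \<rho> x)"

abbreviation ip :: "real poly \<Rightarrow> real poly \<Rightarrow> real" where
  "ip Q R \<equiv> wip \<rho> (\<lambda>x. poly Q (real_of_int x)) (\<lambda>x. poly R (real_of_int x))"

lemma summable_on_power_weight: "(\<lambda>x. real_of_int x ^ i * \<rho> x) summable_on UNIV"
proof -
  have "(\<lambda>x. norm (\<bar>real_of_int x\<bar> ^ i * \<rho> x)) summable_on UNIV"
    using moments by (rule summable_on_iff_abs_summable_on_real[THEN iffD1])
  then have "(\<lambda>x. norm (real_of_int x ^ i * \<rho> x)) summable_on UNIV"
    by (rule Infinite_Sum.abs_summable_on_comparison_test) (simp add: abs_mult power_abs nonneg)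
  then show ?thesis
    by (rule summable_on_iff_abs_summable_on_real[THEN iffD2])
qed

lemma has_sum_wsum: "((\<lambda>x. poly P (real_of_int x) * \<rho> x) has_sum wsum P) UNIV"
proof -
  have "((\<lambda>x. \<Sum>i\<le>degree P. coeff P i * (real_of_int x ^ i * \<rho> x))
          has_sum (\<Sum>i\<le>degree P. coeff P i * infsum (\<lambda>x. real_of_int x ^ i * \<rho> x) UNIV)) UNIV"
    by (intro has_sum_sum has_sum_cmult_right has_sum_infsum summable_on_power_weight) simp
  then have "(\<lambda>x. poly P (real_of_int x) * \<rho> x) summable_on UNIV"
    unfolding summable_on_def by (auto simp: poly_altdef sum_distrib_right mult.assoc)
  then show ?thesis
    unfolding wsum_def by simp
qed

lemma wsum_sum:
  assumes "finite I"
  shows "wsum (\<Sum>i\<in>I. P i) = (\<Sum>i\<in>I. wsum (P i))"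
  unfolding wsum_def[of "sum P I"]
  using has_sum_sum[OF assms has_sum_wsum, of P]
  by (intro infsumI) (simp add: poly_sum sum_distrib_right)

lemma wsum_add: "wsum (P + R) = wsum P + wsum R"
  using wsum_sum[of "{True, False}" "\<lambda>b. if b then P else R"] by simp

lemma wsum_uminus: "wsum (- P) = - wsum P"
  unfolding wsum_def by (simp add: infsum_uminus)

lemma wsum_diff: "wsum (P - R) = wsum P - wsum R"
  using wsum_add[of P "- R"] by (simp add: wsum_uminus)

lemma wsum_smult: "wsum (smult c P) = c * wsum P"
  unfolding wsum_def by (simp add: infsum_cmult_right' mult.assoc)

lemma ip_eq_wsum: "ip Q R = wsum (Q * R)"
  by (simp add: wip_def wsum_def)

end

locale pearson_weight = moment_weight +
  fixes f g :: "real poly"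
  assumes pearson: "\<And>x. poly f (real_of_int (x + 1)) * \<rho> (x + 1) - poly f (real_of_int x) * \<rho> x
                          = poly g (real_of_int x) * \<rho> x"
begin

lemma wsum_summation_by_parts: "wsum (f * pcompose P [:-1, 1:]) = wsum ((f + g) * P)"
proof -
  have "wsum (f * pcompose P [:-1, 1:]) = (\<Sum>\<^sub>\<infinity>x. poly f (real_of_int x) * poly P (real_of_int x - 1) * \<rho> x)"
    by (simp add: wsum_def poly_pcompose algebra_simps)
  also have "\<dots> = (\<Sum>\<^sub>\<infinity>x. poly f (real_of_int (x + 1)) * poly P (real_of_int x) * \<rho> (x + 1))"
    using infsum_reindex_bij_betw[OF bij_plus_right[of "1::int"],
        of "\<lambda>x. poly f (real_of_int x) * poly P (real_of_int x - 1) * \<rho> x"] by simp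
  also have "\<dots> = wsum ((f + g) * P)"
    unfolding wsum_def using pearson by (intro infsum_cong) (simp add: algebra_simps)
  finally show ?thesis .
qed

lemma ip_Al_poly:
  "ip Q (Al_poly f g R) = wsum ((f + g) * (Q * pcompose R [:1, 1:] - pcompose Q [:1, 1:] * R))"
proof -
  have shift_back: "pcompose (pcompose Q [:1, 1:] * R) [:-1, 1:] = Q * pcompose R [:-1, 1:]"
    by (rule poly_ext) (simp add: poly_pcompose)
  have "ip Q (Al_poly f g R) = wsum ((f + g) * (Q * pcompose R [:1, 1:]) - f * (Q * pcompose R [:-1, 1:]))"
    unfolding ip_eq_wsum by (simp add: Al_poly_def algebra_simps)
  also have "\<dots> = wsum ((f + g) * (Q * pcompose R [:1, 1:])) - wsum ((f + g) * (pcompose Q [:1, 1:] * R))"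
    by (simp add: wsum_diff flip: shift_back wsum_summation_by_parts)
  also have "\<dots> = wsum ((f + g) * (Q * pcompose R [:1, 1:] - pcompose Q [:1, 1:] * R))"
    by (simp add: wsum_diff right_diff_distrib)
  finally show ?thesis .
qed

lemma ip_Al_poly_antisym: "ip Q (Al_poly f g R) = - ip R (Al_poly f g Q)"
proof -
  have "(f + g) * (R * pcompose Q [:1, 1:] - pcompose R [:1, 1:] * Q)
      = - ((f + g) * (Q * pcompose R [:1, 1:] - pcompose Q [:1, 1:] * R))"
    by (simp add: algebra_simps)
  then show ?thesis
    unfolding ip_Al_poly by (simp add: wsum_uminus)
qed

end

locale monic_orthogonal_polys = moment_weight +
  fixes p :: "nat \<Rightarrow> real poly" and h :: "nat \<Rightarrow> real"
  assumes degree_p: "\<And>n. degree (p n) = n" and monic: "\<And>n. lead_coeff (p n) = 1"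
    and h_pos: "\<And>n. h n > 0"
    and orth: "\<And>m n. ip (p m) (p n) = (if n = m then h n else 0)"
begin

lemma ip_expansion:
  "ip (p j) (\<Sum>k\<le>m. smult (a k) (p k)) = (if j \<le> m then a j * h j else 0)"
proof -
  have "ip (p j) (\<Sum>k\<le>m. smult (a k) (p k)) = (\<Sum>k\<le>m. a k * ip (p j) (p k))"
    by (simp add: ip_eq_wsum sum_distrib_left wsum_sum wsum_smult)
  also have "\<dots> = (if j \<le> m then a j * h j else 0)"
    by (simp add: orth if_distrib[of "(*) _"] cong: if_cong)
  finally show ?thesis .
qed

lemma orthogonal_expansion:
  assumes "degree Q \<le> m"
  shows "Q = (\<Sum>k\<le>m. smult (ip (p k) Q / h k) (p k))"
proof -
  obtain a where a: "Q = (\<Sum>k\<le>m. smult (a k) (p k))"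
    using monic_basis_expansion[OF degree_p monic assms] by blast
  have "a k = ip (p k) Q / h k" if "k \<le> m" for k
    using ip_expansion[where j = k and m = m and a = a] h_pos[of k] that by (simp flip: a)
  then have "(\<Sum>k\<le>m. smult (a k) (p k)) = (\<Sum>k\<le>m. smult (ip (p k) Q / h k) (p k))"
    by (intro sum.cong) simp_all
  with a show ?thesis
    by (rule trans)
qed

lemma ip_eq_0_if_degree_less: "degree Q < j \<Longrightarrow> ip (p j) Q = 0"
proof -
  assume "degree Q < j"
  moreover obtain a where "Q = (\<Sum>k\<le>degree Q. smult (a k) (p k))"
    using monic_basis_expansion[OF degree_p monic order_refl] by blast
  ultimately show ?thesis
    using ip_expansion[where j = j and m = "degree Q" and a = a] by simp
qed

end

locale pearson_orthogonal_polys = pearson_weight + monic_orthogonal_polys +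
  assumes degree_f: "degree f \<le> 2" and degree_g: "degree g \<le> 1"
begin

definition Al_coeff :: "nat \<Rightarrow> real" where
  "Al_coeff n = ip (p n) (Al_poly f g (p (n + 1)))"

lemma degree_Al_poly_basis_le: "degree (Al_poly f g (p n)) \<le> n + 1"
  using degree_Al_poly_le[OF degree_f degree_g, of "p n"] by (simp add: degree_p)

lemma ip_Al_poly_basis:
  "ip (p j) (Al_poly f g (p k))
     = (if k = j + 1 then Al_coeff j else 0) - (if j = k + 1 then Al_coeff k else 0)"
proof -
  consider "k = j + 1" | "j = k + 1" | "k + 1 < j" | "j + 1 < k" | "j = k"
    by linarith
  then show ?thesis
  proof cases
    case 1
    then show ?thesis by (simp add: Al_coeff_def)
  next
    case 2
    then show ?thesis
      using ip_Al_poly_antisym[of "p j" "p k"] by (simp add: Al_coeff_def)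
  next
    case 3
    then show ?thesis
      using ip_eq_0_if_degree_less degree_Al_poly_basis_le[of k] by simp
  next
    case 4
    then show ?thesis
      using ip_eq_0_if_degree_less degree_Al_poly_basis_le[of j] ip_Al_poly_antisym[of "p j"] by simp
  next
    case 5
    then show ?thesis
      using ip_Al_poly_antisym[of "p j" "p j"] by simp
  qed
qed

lemma Al_poly_three_term:
  "Al_poly f g (p n) = smult (- (Al_coeff n / h (n + 1))) (p (n + 1))
     + (if n = 0 then 0 else smult (Al_coeff (n - 1) / h (n - 1)) (p (n - 1)))"
proof -
  have "Al_poly f g (p n) = (\<Sum>k\<le>n + 1. smult (ip (p k) (Al_poly f g (p n)) / h k) (p k))"
    by (rule orthogonal_expansion[OF degree_Al_poly_basis_le])
  also have "\<dots> = (\<Sum>k\<le>n + 1. if n = k + 1 then smult (Al_coeff k / h k) (p k) else 0)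
                  - (\<Sum>k\<le>n + 1. if k = n + 1 then smult (Al_coeff n / h k) (p k) else 0)"
    unfolding ip_Al_poly_basis diff_divide_distrib smult_diff_left sum_subtractf
    by (intro arg_cong2[where f = "(-)"] sum.cong) auto
  also have "\<dots> = smult (- (Al_coeff n / h (n + 1))) (p (n + 1))
     + (if n = 0 then 0 else smult (Al_coeff (n - 1) / h (n - 1)) (p (n - 1)))"
    by (cases n) simp_all
  finally show ?thesis .
qed

end

theorem proposition3p8:
  fixes \<rho> :: "int \<Rightarrow> real" and f g :: "real poly"
    and p :: "nat \<Rightarrow> real poly" and h :: "nat \<Rightarrow> real"
  assumes nonneg: "\<forall>x. \<rho> x \<ge> 0"
    and moments: "\<forall>k::nat. (\<lambda>x. \<bar>real_of_int x\<bar> ^ k * \<rho> x) summable_on UNIV"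
    and deg_f: "degree f \<le> 2" and deg_g: "degree g \<le> 1"
    and pearson: "\<forall>x. poly f (real_of_int (x + 1)) * \<rho> (x + 1) - poly f (real_of_int x) * \<rho> x
                       = poly g (real_of_int x) * \<rho> x"
    and boundary: "vanishes_at_endpoints \<rho> f"
    and deg_p: "\<forall>n. degree (p n) = n" and monic: "\<forall>n. lead_coeff (p n) = 1"
    and h_pos: "\<forall>n. h n > 0"
    and orth: "\<forall>m n. wip \<rho> (\<lambda>x. poly (p m) (real_of_int x)) (\<lambda>x. poly (p n) (real_of_int x))
                    = (if n = m then h n else 0)"
  shows "\<exists>c :: nat \<Rightarrow> real.
           (\<forall>n x. Al f g (\<lambda>y. poly (p n) (real_of_int y)) x
                  = - (c n / h (n + 1)) * poly (p (n + 1)) (real_of_int x)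
                    + (if n = 0 then 0 else c (n - 1) / h (n - 1) * poly (p (n - 1)) (real_of_int x))) \<and>
           (\<forall>j k. wip \<rho> (\<lambda>y. poly (p j) (real_of_int y)) (Al f g (\<lambda>y. poly (p k) (real_of_int y)))
                  = (if k = j + 1 then c j else 0) - (if j = k + 1 then c k else 0))"
proof -
  interpret pearson_orthogonal_polys \<rho> f g p h
    using nonneg moments pearson deg_p monic h_pos orth deg_f deg_g by unfold_locales auto
  show ?thesis
  proof (intro exI[of _ Al_coeff] conjI allI)
    fix n x
    show "Al f g (\<lambda>y. poly (p n) (real_of_int y)) x
        = - (Al_coeff n / h (n + 1)) * poly (p (n + 1)) (real_of_int x)
          + (if n = 0 then 0 else Al_coeff (n - 1) / h (n - 1) * poly (p (n - 1)) (real_of_int x))"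
      unfolding Al_eq_poly_Al_poly Al_poly_three_term by simp
  next
    fix j k
    show "wip \<rho> (\<lambda>y. poly (p j) (real_of_int y)) (Al f g (\<lambda>y. poly (p k) (real_of_int y)))
        = (if k = j + 1 then Al_coeff j else 0) - (if j = k + 1 then Al_coeff k else 0)"
      unfolding Al_eq_poly_Al_poly by (rule ip_Al_poly_basis)
  qed
qed

end
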